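(* Let $(X,\mathcal{A})$ be a $(v,k,\lambda)$-BIBD with $k\ge 2$, and let $r=\lambda(v-1)/(k-1)$. If $(X,\mathcal{A})$ has a weak nesting $\phi:\mathcal{A}\to Y$ into a partial $(w,k+1,\lambda+1)$-BIBD, where $X\subseteq Y$ and $|Y|=w$, then \[ w\ \ge\ \frac{r}{\lambda+1}+\frac{v+2\lambda v+1}{2(\lambda+1)}. \]
   Context: A $(v,k,\lambda)$-BIBD is a pair $(X,\mathcal{A})$ where $X$ is a set of $v$ points and $\mathcal{A}$ is a multiset of $k$-subsets of $X$ (blocks) such that every pair of distinct points lies in exactly $\lambda$ blocks. A partial $(w,k,\lambda)$-BIBD is defined in the same way on $w$ points, except that every pair lies in at most $\lambda$ blocks. Given a $(v,k,\lambda)$-BIBD $(X,\mathcal{A})$ and a set $Y\supseteq X$ with $|Y|=w$, a map $\phi:\mathcal{A}\to Y$ is a weak nesting if $\phi(A)\notin A$ for every block $A$ and the multiset $\{A\cup\{\phi(A)\}:A\in\mathcal{A}\}$ is a partial $(w,k+1,\lambda+1)$-BIBD on $Y$. *)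

theory Defs
  imports Complex_Main "HOL-Library.Multiset"
begin

definition pair_count :: "'a set multiset \<Rightarrow> 'a \<Rightarrow> 'a \<Rightarrow> nat" where
  "pair_count \<B> x y = size (filter_mset (\<lambda>A. x \<in> A \<and> y \<in> A) \<B>)"

definition is_BIBD :: "'a set \<Rightarrow> 'a set multiset \<Rightarrow> nat \<Rightarrow> nat \<Rightarrow> nat \<Rightarrow> bool" where
  "is_BIBD X \<B> v k lam \<longleftrightarrow>
     finite X \<and> card X = v \<and>
     (\<forall>A\<in>#\<B>. A \<subseteq> X \<and> card A = k) \<and>
     (\<forall>x\<in>X. \<forall>y\<in>X. x \<noteq> y \<longrightarrow> pair_count \<B> x y = lam)"

definition is_partial_BIBD :: "'a set \<Rightarrow> 'a set multiset \<Rightarrow> nat \<Rightarrow> nat \<Rightarrow> nat \<Rightarrow> bool" where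
  "is_partial_BIBD Y \<B> w k lam \<longleftrightarrow>
     finite Y \<and> card Y = w \<and>
     (\<forall>A\<in>#\<B>. A \<subseteq> Y \<and> card A = k) \<and>
     (\<forall>x\<in>Y. \<forall>y\<in>Y. x \<noteq> y \<longrightarrow> pair_count \<B> x y \<le> lam)"

(* Blocks are indexed by a finite set I (B i is the block with index i), so the
   block multiset is image_mset B (mset_set I); the nesting map phi is defined
   per block occurrence (index). phi is a weak nesting of the (v,k,lambda)-BIBD
   (X, blocks) into Y, |Y| = w. *)
definition weak_nesting ::
  "'a set \<Rightarrow> 'i set \<Rightarrow> ('i \<Rightarrow> 'a set) \<Rightarrow> nat \<Rightarrow> nat \<Rightarrow> 'a set \<Rightarrow> nat \<Rightarrow> ('i \<Rightarrow> 'a) \<Rightarrow> bool" where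
  "weak_nesting X I B k lam Y w \<phi> \<longleftrightarrow>
     X \<subseteq> Y \<and>
     (\<forall>i\<in>I. \<phi> i \<in> Y \<and> \<phi> i \<notin> B i) \<and>
     is_partial_BIBD Y (image_mset (\<lambda>i. insert (\<phi> i) (B i)) (mset_set I)) w (k + 1) (lam + 1)"

end

theory Submission
  imports Defs
begin

(* Label every incidence of a point x with a block B i by the pair (x, phi i); there are
   b k = v r labels. Two distinct points of X already share lam blocks, so the nested design
   leaves room for at most one label (x, y) or (y, x) between them, while a label (x, y) with
   y outside X occurs at most lam + 1 times. Hence v r <= v (v - 1) / 2 + v (w - v) (lam + 1),
   which rearranges to the bound. *)

lemma pair_count_image_mset_mset_set:
  assumes "finite I"
  shows "pair_count (image_mset B (mset_set I)) x y = card {i\<in>I. x \<in> B i \<and> y \<in> B i}"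
  using assms by (simp add: pair_count_def filter_mset_image_mset)

lemma card_off_diagonal:
  assumes "finite X"
  shows "card {(x, y) \<in> X \<times> X. x \<noteq> y} = card X * (card X - 1)"
proof -
  have "{(x, y) \<in> X \<times> X. x \<noteq> y} = (SIGMA x:X. X - {x})" by auto
  then show ?thesis using assms by simp
qed

lemma sum_le_card_off_diagonal:
  fixes f :: "'a \<Rightarrow> 'a \<Rightarrow> nat"
  assumes "finite X"
    and "\<And>x. x \<in> X \<Longrightarrow> f x x = 0"
    and "\<And>x y. x \<in> X \<Longrightarrow> y \<in> X \<Longrightarrow> x \<noteq> y \<Longrightarrow> f x y + f y x \<le> 1"
  shows "2 * (\<Sum>(x, y)\<in>X \<times> X. f x y) \<le> card X * (card X - 1)"
proof -
  have swap: "(\<Sum>(x, y)\<in>X \<times> X. f y x) = (\<Sum>(x, y)\<in>X \<times> X. f x y)"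
    by (rule sum.reindex_bij_witness[of _ prod.swap prod.swap]) auto
  have "2 * (\<Sum>(x, y)\<in>X \<times> X. f x y) = (\<Sum>(x, y)\<in>X \<times> X. f x y) + (\<Sum>(x, y)\<in>X \<times> X. f y x)"
    by (simp add: swap)
  also have "\<dots> = (\<Sum>(x, y)\<in>X \<times> X. f x y + f y x)"
    by (simp only: sum.distrib[symmetric]) (simp add: split_def)
  also have "\<dots> \<le> (\<Sum>(x, y)\<in>X \<times> X. if x \<noteq> y then 1 else 0)"
    by (rule sum_mono) (use assms(2,3) in auto)
  also have "\<dots> = card {(x, y) \<in> X \<times> X. x \<noteq> y}"
    using assms(1) by (simp add: sum.If_cases split_def Int_def) (rule arg_cong[where f = card], auto)
  finally show ?thesis using card_off_diagonal[OF assms(1)] by simp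
qed

lemma is_BIBD_card_blocks:
  assumes "finite I" and "is_BIBD X (image_mset B (mset_set I)) v k lam"
  shows "card I * (k * (k - 1)) = lam * (v * (v - 1))"
proof -
  let ?P = "{(x, y) \<in> X \<times> X. x \<noteq> y}"
  have X: "finite X" "card X = v"
    and blocks: "\<And>i. i \<in> I \<Longrightarrow> B i \<subseteq> X \<and> card (B i) = k"
    and pairs: "\<And>x y. x \<in> X \<Longrightarrow> y \<in> X \<Longrightarrow> x \<noteq> y \<Longrightarrow> card {i\<in>I. x \<in> B i \<and> y \<in> B i} = lam"
    using assms by (auto simp: is_BIBD_def pair_count_image_mset_mset_set)
  have "\<forall>p\<in>?P. card {i\<in>I. case p of (x, y) \<Rightarrow> x \<in> B i \<and> y \<in> B i} = lam"
    using pairs by auto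
  then have "(\<Sum>i\<in>I. card {p\<in>?P. case p of (x, y) \<Rightarrow> x \<in> B i \<and> y \<in> B i}) = lam * card ?P"
    using assms(1) X(1) by (intro sum_multicount) (auto intro: rev_finite_subset[of "X \<times> X"])
  moreover have "card {p\<in>?P. case p of (x, y) \<Rightarrow> x \<in> B i \<and> y \<in> B i} = k * (k - 1)" if "i \<in> I" for i
  proof -
    have "{p\<in>?P. case p of (x, y) \<Rightarrow> x \<in> B i \<and> y \<in> B i} = {(x, y) \<in> B i \<times> B i. x \<noteq> y}"
      using blocks[OF that] by auto
    then show ?thesis
      using blocks[OF that] card_off_diagonal[of "B i"] X(1) finite_subset by metis
  qed
  ultimately show ?thesis
    using card_off_diagonal[OF X(1)] X(2) by simp
qed

lemma is_BIBD_replication: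
  assumes "finite I" and "is_BIBD X (image_mset B (mset_set I)) v k lam" and "k \<ge> 2"
  shows "real (card I) * real k = real v * (real lam * (real v - 1) / (real k - 1))"
proof -
  have "real (card I) * real k * (real k - 1) = real lam * real v * (real v - 1)"
    using arg_cong[OF is_BIBD_card_blocks[OF assms(1,2)], of real] assms(3)
    by (cases v) (simp_all add: of_nat_diff algebra_simps)
  then show ?thesis using assms(3) by (simp add: field_simps)
qed

definition nest_count :: "'i set \<Rightarrow> ('i \<Rightarrow> 'a set) \<Rightarrow> ('i \<Rightarrow> 'a) \<Rightarrow> 'a \<Rightarrow> 'a \<Rightarrow> nat" where
  "nest_count I B \<phi> x y = card {i\<in>I. x \<in> B i \<and> \<phi> i = y}"

lemma sum_nest_count:
  assumes "finite I" and "finite X" and "finite Y"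
    and "\<And>i. i \<in> I \<Longrightarrow> B i \<subseteq> X \<and> card (B i) = k" and "\<And>i. i \<in> I \<Longrightarrow> \<phi> i \<in> Y"
  shows "(\<Sum>(x, y)\<in>X \<times> Y. nest_count I B \<phi> x y) = card I * k"
proof -
  have "card {p\<in>X \<times> Y. case p of (x, y) \<Rightarrow> x \<in> B i \<and> \<phi> i = y} = k" if "i \<in> I" for i
  proof -
    have "{p\<in>X \<times> Y. case p of (x, y) \<Rightarrow> x \<in> B i \<and> \<phi> i = y} = B i \<times> {\<phi> i}"
      using assms(4,5)[OF that] by auto
    then show ?thesis using assms(4)[OF that] by (simp add: card_cartesian_product)
  qed
  then have "(\<Sum>i\<in>I. card {p\<in>X \<times> Y. case p of (x, y) \<Rightarrow> x \<in> B i \<and> \<phi> i = y}) = card I * k"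
    by simp
  moreover have "(\<Sum>i\<in>I. card {p\<in>X \<times> Y. case p of (x, y) \<Rightarrow> x \<in> B i \<and> \<phi> i = y})
      = (\<Sum>(x, y)\<in>X \<times> Y. nest_count I B \<phi> x y)"
    using assms(1-3) by (intro sum_multicount_gen) (auto simp: nest_count_def)
  ultimately show ?thesis by simp
qed

lemma card_nested_pair:
  assumes "finite I" and "\<And>i. i \<in> I \<Longrightarrow> \<phi> i \<notin> B i" and "x \<noteq> y"
  shows "card {i\<in>I. x \<in> insert (\<phi> i) (B i) \<and> y \<in> insert (\<phi> i) (B i)}
    = card {i\<in>I. x \<in> B i \<and> y \<in> B i} + nest_count I B \<phi> x y + nest_count I B \<phi> y x"
proof -
  have "{i\<in>I. x \<in> insert (\<phi> i) (B i) \<and> y \<in> insert (\<phi> i) (B i)}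
    = {i\<in>I. x \<in> B i \<and> y \<in> B i} \<union> {i\<in>I. x \<in> B i \<and> \<phi> i = y} \<union> {i\<in>I. y \<in> B i \<and> \<phi> i = x}"
    using assms(3) by auto
  also have "card \<dots> = card {i\<in>I. x \<in> B i \<and> y \<in> B i} + nest_count I B \<phi> x y + nest_count I B \<phi> y x"
    unfolding nest_count_def using assms by (subst card_Un_disjoint; auto)+
  finally show ?thesis .
qed

lemma weak_nesting_incidence_bound:
  assumes "finite I" and "is_BIBD X (image_mset B (mset_set I)) v k lam"
    and "weak_nesting X I B k lam Y w \<phi>"
  shows "2 * (card I * k) \<le> v * (v - 1) + 2 * (v * (w - v) * (lam + 1))"
proof -
  let ?N = "nest_count I B \<phi>"
  have X: "finite X" "card X = v"
    and blocks: "\<And>i. i \<in> I \<Longrightarrow> B i \<subseteq> X \<and> card (B i) = k"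
    and pairs: "\<And>x y. x \<in> X \<Longrightarrow> y \<in> X \<Longrightarrow> x \<noteq> y \<Longrightarrow> card {i\<in>I. x \<in> B i \<and> y \<in> B i} = lam"
    using assms(1,2) by (auto simp: is_BIBD_def pair_count_image_mset_mset_set)
  have Y: "finite Y" "card Y = w" "X \<subseteq> Y"
    and \<phi>: "\<And>i. i \<in> I \<Longrightarrow> \<phi> i \<in> Y \<and> \<phi> i \<notin> B i"
    and nested: "\<And>x y. x \<in> Y \<Longrightarrow> y \<in> Y \<Longrightarrow> x \<noteq> y \<Longrightarrow>
      card {i\<in>I. x \<in> insert (\<phi> i) (B i) \<and> y \<in> insert (\<phi> i) (B i)} \<le> lam + 1"
    using assms(1,3) by (auto simp: weak_nesting_def is_partial_BIBD_def
        pair_count_image_mset_mset_set[where B = "\<lambda>i. insert (\<phi> i) (B i)"])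
  have nested_pairs: "card {i\<in>I. x \<in> B i \<and> y \<in> B i} + ?N x y + ?N y x \<le> lam + 1"
    if "x \<in> Y" "y \<in> Y" "x \<noteq> y" for x y
    using nested[OF that] card_nested_pair[OF assms(1), of \<phi> B x y] \<phi> that(3) by simp
  have "?N x x = 0" for x
    using \<phi> by (auto simp: nest_count_def card_eq_0_iff)
  moreover have "?N x y + ?N y x \<le> 1" if "x \<in> X" "y \<in> X" "x \<noteq> y" for x y
    using nested_pairs[of x y] pairs[OF that] that Y(3) by auto
  ultimately have inner: "2 * (\<Sum>(x, y)\<in>X \<times> X. ?N x y) \<le> v * (v - 1)"
    using sum_le_card_off_diagonal[OF X(1), of ?N] X(2) by simp
  have "?N x y \<le> lam + 1" if "x \<in> X" "y \<in> Y - X" for x y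
    by (rule le_trans[OF _ nested_pairs[of x y]]) (use that Y(3) in auto)
  then have "(\<Sum>(x, y)\<in>X \<times> (Y - X). ?N x y) \<le> card (X \<times> (Y - X)) * (lam + 1)"
    using sum_bounded_above[of "X \<times> (Y - X)" "case_prod ?N" "lam + 1"] by auto
  also have "\<dots> = v * (w - v) * (lam + 1)"
    using X Y by (simp add: card_cartesian_product card_Diff_subset)
  finally have outer: "(\<Sum>(x, y)\<in>X \<times> (Y - X). ?N x y) \<le> v * (w - v) * (lam + 1)" .
  have "card I * k = (\<Sum>(x, y)\<in>X \<times> Y. ?N x y)"
    using sum_nest_count[OF assms(1) X(1) Y(1) blocks] \<phi> by simp
  also have "X \<times> Y = X \<times> X \<union> X \<times> (Y - X)"
    using Y(3) by auto
  also have "(\<Sum>(x, y)\<in>X \<times> X \<union> X \<times> (Y - X). ?N x y)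
      = (\<Sum>(x, y)\<in>X \<times> X. ?N x y) + (\<Sum>(x, y)\<in>X \<times> (Y - X). ?N x y)"
    using X(1) Y(1) by (intro sum.union_disjoint) auto
  finally show ?thesis using inner outer by linarith
qed

lemma weak_nesting_replication_bound:
  assumes "finite I" and "is_BIBD X (image_mset B (mset_set I)) v k lam"
    and "k \<ge> 2" and "k \<le> v" and "weak_nesting X I B k lam Y w \<phi>"
  shows "2 * (real lam * (real v - 1) / (real k - 1))
    \<le> real v - 1 + 2 * (real w - real v) * (real lam + 1)"
proof -
  define r where "r = real lam * (real v - 1) / (real k - 1)"
  have "0 < v" using assms(3,4) by simp
  have "X \<subseteq> Y" "finite Y" "card X = v" "card Y = w"
    using assms(2,5) by (auto simp: is_BIBD_def weak_nesting_def is_partial_BIBD_def)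
  then have "v \<le> w" using card_mono by blast
  have "real (2 * (card I * k)) \<le> real (v * (v - 1) + 2 * (v * (w - v) * (lam + 1)))"
    using weak_nesting_incidence_bound[OF assms(1,2,5)] by (simp only: of_nat_le_iff)
  moreover have "real (v - 1) = real v - 1" "real (w - v) = real w - real v"
    using \<open>0 < v\<close> \<open>v \<le> w\<close> by (simp_all add: of_nat_diff)
  ultimately have "2 * (real (card I) * real k)
      \<le> real v * (real v - 1) + 2 * (real v * (real w - real v) * (real lam + 1))"
    by (simp only: of_nat_add of_nat_mult of_nat_numeral of_nat_1)
  moreover have "real (card I) * real k = real v * r"
    unfolding r_def by (rule is_BIBD_replication[OF assms(1-3)])
  ultimately have "real v * (2 * r) \<le> real v * (real v - 1 + 2 * (real w - real v) * (real lam + 1))"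
    by (simp add: algebra_simps)
  then have "2 * r \<le> real v - 1 + 2 * (real w - real v) * (real lam + 1)"
    using \<open>0 < v\<close> by simp
  then show ?thesis unfolding r_def .
qed

theorem theorem3p1:
  fixes X Y :: "'a set" and I :: "'i set" and B :: "'i \<Rightarrow> 'a set" and \<phi> :: "'i \<Rightarrow> 'a"
    and v k lam w :: nat
  assumes "finite I"
    and "is_BIBD X (image_mset B (mset_set I)) v k lam"
    and "k \<ge> 2" and "k \<le> v"
    and "weak_nesting X I B k lam Y w \<phi>"
  shows "real w \<ge> (real lam * (real v - 1) / (real k - 1)) / (real lam + 1)
                  + (real v + 2 * real lam * real v + 1) / (2 * (real lam + 1))"
proof -
  define r where "r = real lam * (real v - 1) / (real k - 1)"
  have "2 * r + real v + 2 * real lam * real v + 1 \<le> real w * (2 * (real lam + 1))"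
    using weak_nesting_replication_bound[OF assms] unfolding r_def[symmetric]
    by (simp add: algebra_simps)
  then have "(2 * r + real v + 2 * real lam * real v + 1) / (2 * (real lam + 1)) \<le> real w"
    by (subst pos_divide_le_eq) auto
  moreover have "r / (real lam + 1) + (real v + 2 * real lam * real v + 1) / (2 * (real lam + 1))
      = (2 * r + real v + 2 * real lam * real v + 1) / (2 * (real lam + 1))"
    by (simp add: divide_simps) (simp add: algebra_simps)
  ultimately show ?thesis
    unfolding r_def by simp
qed

end
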